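(* Let $p(L,M,D;\mu=1)$ be a generative reasoning model, let $\alpha\in L$, and let $\Delta\subseteq L$ be finite with $[\![\Delta]\!]_p\neq\emptyset$. Then $p(\alpha\mid\Delta)=1$ if and only if $\Delta\mathrel{|\!\!\equiv}\alpha$.
   Context: Fix a multiset of data $\{d_1,\dots,d_K\}$ with $K\ge1$, and a propositional language $L$ over finitely many atoms, with set of models (truth assignments) $\mathcal M$. A function $m:\{d_1,\dots,d_K\}\to\mathcal M$ assigns to each datum the model it supports. The probability of a model $n$ is $p(n)=|\{k:m(d_k)=n\}|/K$. For a parameter $\mu\in[0,1]$ and $\alpha\in L$, set $p(\alpha\mid m)=\mu$ if $m$ satisfies $\alpha$ and $1-\mu$ otherwise. For finite $\Delta\subseteq L$, set $p(\Delta\mid m)=\prod_{\beta\in\Delta}p(\beta\mid m)$, which is $1$ for empty $\Delta$. Define $$p(\alpha\mid\Delta)=\frac{\sum_{m}p(\alpha\mid m)p(\Delta\mid m)p(m)}{\sum_m p(\Delta\mid m)p(m)}.$$ This is the generative reasoning model $p(L,M,D;\mu)$. For $\mu=1$ the expression is evaluated at $\mu=1$, and it is undefined when the denominator is $0$. Notation: - $[\![\Delta]\!]$ is the set of models satisfying all formulas in $\Delta$, and $[\![\alpha]\!]=[\![\{\alpha\}]\!]$. - $[\![\Delta]\!]_p=\{m\in[\![\Delta]\!]:p(m)\neq0\}$. - $\Delta\mathrel{|\!\!\equiv}\alpha$ (empirical consequence) means $[\![\Delta]\!]_p\subseteq[\![\alpha]\!]_p$. *)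

theory Defs
  imports "HOL-Analysis.Analysis"
begin

datatype 'a form = Atom 'a | Bot | Neg "'a form" | Conj "'a form" "'a form"
  | Disj "'a form" "'a form" | Imp "'a form" "'a form"

type_synonym 'a model = "'a \<Rightarrow> bool"

fun sat :: "'a model \<Rightarrow> 'a form \<Rightarrow> bool" where
  "sat v (Atom x) = v x"
| "sat v Bot = False"
| "sat v (Neg f) = (\<not> sat v f)"
| "sat v (Conj f g) = (sat v f \<and> sat v g)"
| "sat v (Disj f g) = (sat v f \<or> sat v g)"
| "sat v (Imp f g) = (sat v f \<longrightarrow> sat v g)"

text \<open>Data: a nonempty multiset of data D (given as a list, K = length D);
  m assigns to each datum the model it supports.\<close>
definition pmodel :: "'d list \<Rightarrow> ('d \<Rightarrow> 'a model) \<Rightarrow> 'a model \<Rightarrow> real" where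
  "pmodel D m n = real (length (filter (\<lambda>d. m d = n) D)) / real (length D)"

definition p_form_model :: "real \<Rightarrow> 'a form \<Rightarrow> 'a model \<Rightarrow> real" where
  "p_form_model \<mu> \<alpha> n = (if sat n \<alpha> then \<mu> else 1 - \<mu>)"

definition p_set_model :: "real \<Rightarrow> 'a form set \<Rightarrow> 'a model \<Rightarrow> real" where
  "p_set_model \<mu> \<Delta> n = (\<Prod>\<beta>\<in>\<Delta>. p_form_model \<mu> \<beta> n)"

text \<open>p(alpha | Delta) in the generative reasoning model p(L,M,D;mu);
  sums range over all models (finitely many, since 'a is finite).\<close>
definition p_cond :: "'d list \<Rightarrow> ('d \<Rightarrow> 'a::finite model) \<Rightarrow> real \<Rightarrow> 'a form \<Rightarrow> 'a form set \<Rightarrow> real" where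
  "p_cond D m \<mu> \<alpha> \<Delta> =
     (\<Sum>n\<in>UNIV. p_form_model \<mu> \<alpha> n * p_set_model \<mu> \<Delta> n * pmodel D m n) /
     (\<Sum>n\<in>UNIV. p_set_model \<mu> \<Delta> n * pmodel D m n)"

definition models :: "'a form set \<Rightarrow> 'a model set" where
  "models \<Delta> = {n. \<forall>\<beta>\<in>\<Delta>. sat n \<beta>}"

definition models_p :: "'d list \<Rightarrow> ('d \<Rightarrow> 'a model) \<Rightarrow> 'a form set \<Rightarrow> 'a model set" where
  "models_p D m \<Delta> = {n \<in> models \<Delta>. pmodel D m n \<noteq> 0}"

definition emp_conseq :: "'d list \<Rightarrow> ('d \<Rightarrow> 'a model) \<Rightarrow> 'a form set \<Rightarrow> 'a form \<Rightarrow> bool" where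
  "emp_conseq D m \<Delta> \<alpha> \<longleftrightarrow> models_p D m \<Delta> \<subseteq> models_p D m {\<alpha>}"

end

theory Submission
  imports Defs
begin

text \<open>At \<open>\<mu> = 1\<close> the likelihood of \<open>\<Delta>\<close> is the indicator of \<open>[\<Delta>]\<close>, so \<open>p(\<alpha> | \<Delta>)\<close> is the
  share of the nonnegative weight \<open>p(n)\<close> on \<open>[\<Delta>]\<close> carried by models of \<open>\<alpha>\<close>. Such a share equals 1
  exactly when no model of positive weight in \<open>[\<Delta>]\<close> falsifies \<open>\<alpha>\<close>.\<close>

lemma weighted_share_eq_one_iff:
  fixes w :: "'a \<Rightarrow> real"
  assumes "finite A" and "\<And>x. x \<in> A \<Longrightarrow> w x \<ge> 0" and "sum w A > 0"
  shows "(\<Sum>x\<in>A. of_bool (P x) * w x) / sum w A = 1 \<longleftrightarrow> (\<forall>x\<in>A. w x \<noteq> 0 \<longrightarrow> P x)"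
proof -
  have "sum w A - (\<Sum>x\<in>A. of_bool (P x) * w x) = (\<Sum>x\<in>A. of_bool (\<not> P x) * w x)"
    by (simp add: sum_subtractf[symmetric]) (rule sum.cong; simp)
  then have "(\<Sum>x\<in>A. of_bool (P x) * w x) / sum w A = 1 \<longleftrightarrow> (\<Sum>x\<in>A. of_bool (\<not> P x) * w x) = 0"
    using assms(3) by auto
  also have "\<dots> \<longleftrightarrow> (\<forall>x\<in>A. of_bool (\<not> P x) * w x = 0)"
    using assms(1,2) by (intro sum_nonneg_eq_0_iff) auto
  finally show ?thesis by auto
qed

lemma pmodel_nonneg: "pmodel D m n \<ge> 0"
  unfolding pmodel_def by simp

lemma p_form_model_one: "p_form_model 1 \<alpha> n = of_bool (sat n \<alpha>)"
  unfolding p_form_model_def by simp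

lemma p_set_model_one:
  assumes "finite \<Delta>"
  shows "p_set_model 1 \<Delta> n = of_bool (n \<in> models \<Delta>)"
  using assms unfolding p_set_model_def models_def p_form_model_def
  by (auto intro: prod.neutral prod_zero)

lemma p_cond_one:
  assumes "finite \<Delta>"
  shows "p_cond D m 1 \<alpha> \<Delta> =
    (\<Sum>n\<in>UNIV. of_bool (sat n \<alpha>) * (of_bool (n \<in> models \<Delta>) * pmodel D m n)) /
    (\<Sum>n\<in>UNIV. of_bool (n \<in> models \<Delta>) * pmodel D m n)"
  unfolding p_cond_def p_form_model_one p_set_model_one[OF assms] by (simp add: mult.assoc)

lemma models_p_iff_weight_nonzero:
  "n \<in> models_p D m \<Delta> \<longleftrightarrow> of_bool (n \<in> models \<Delta>) * pmodel D m n \<noteq> 0"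
  unfolding models_p_def by simp

lemma evidence_pos_if_models_p_nonempty:
  fixes m :: "'d \<Rightarrow> 'a::finite model"
  assumes "models_p D m \<Delta> \<noteq> {}"
  shows "(\<Sum>n\<in>UNIV. of_bool (n \<in> models \<Delta>) * pmodel D m n) > 0"
proof -
  obtain n0 where "n0 \<in> models_p D m \<Delta>"
    using assms by blast
  then have "of_bool (n0 \<in> models \<Delta>) * pmodel D m n0 > 0"
    using pmodel_nonneg[of D m n0] unfolding models_p_def by auto
  also have "\<dots> \<le> (\<Sum>n\<in>UNIV. of_bool (n \<in> models \<Delta>) * pmodel D m n)"
    by (rule member_le_sum) (auto simp: pmodel_nonneg)
  finally show ?thesis .
qed

theorem corollary2:
  fixes D :: "'d list" and m :: "'d \<Rightarrow> 'a::finite model"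
    and \<alpha> :: "'a form" and \<Delta> :: "'a form set"
  assumes "D \<noteq> []"
    and "finite \<Delta>"
    and "models_p D m \<Delta> \<noteq> {}"
  shows "p_cond D m 1 \<alpha> \<Delta> = 1 \<longleftrightarrow> emp_conseq D m \<Delta> \<alpha>"
proof -
  have "p_cond D m 1 \<alpha> \<Delta> = 1 \<longleftrightarrow> (\<forall>n. n \<in> models_p D m \<Delta> \<longrightarrow> sat n \<alpha>)"
    unfolding p_cond_one[OF assms(2)] models_p_iff_weight_nonzero
    using evidence_pos_if_models_p_nonempty[OF assms(3)]
    by (subst weighted_share_eq_one_iff) (auto simp: pmodel_nonneg)
  also have "\<dots> \<longleftrightarrow> emp_conseq D m \<Delta> \<alpha>"
    unfolding emp_conseq_def models_p_def models_def by auto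
  finally show ?thesis .
qed

end
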